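(* Let $J\subseteq S$. The fibers of $\Pi_\downarrow^J$ are order-convex: if $u,x,v\in\mathfrak{S}_n^J$ satisfy $u\le_S x\le_S v$ and $\Pi_\downarrow^J(u)=\Pi_\downarrow^J(v)$, then $\Pi_\downarrow^J(u)=\Pi_\downarrow^J(x)$.
   Context: $\mathfrak{S}_n$ is the symmetric group on $[n]$, $s_i=(i,i+1)$, $S=\{s_1,\dots,s_{n-1}\}$, one-line notation $w=w_1\cdots w_n$, $\mathrm{inv}(w)=\{(i,j):i<j,\ w_i>w_j\}$, and the weak order $u\le_S v\iff\mathrm{inv}(u)\subseteq\mathrm{inv}(v)$. For $J\subseteq S$, $\mathfrak{S}_n^J$ is the set of $w$ with $w_i<w_{i+1}$ whenever $s_i\in J$. Writing $J=S\setminus\{s_{j_1},\dots,s_{j_r}\}$ with $j_1<\dots<j_r$, the $J$-regions are $\{1,\dots,j_1\},\{j_1+1,\dots,j_2\},\dots,\{j_r+1,\dots,n\}$. $\mathfrak{S}_n^J(231)$ is the set of $w\in\mathfrak{S}_n^J$ admitting no indices $i<j<k$ in pairwise different $J$-regions with $w_k<w_i<w_j$ and $w_i=w_k+1$. For each $w\in\mathfrak{S}_n^J$ there is a unique greatest element (in $\le_S$) of $\mathfrak{S}_n^J(231)$ lying below $w$; the map $\Pi_\downarrow^J:\mathfrak{S}_n^J\to\mathfrak{S}_n^J(231)$ sends $w$ to this element. *)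

theory Defs
  imports "HOL-Combinatorics.Permutations"
begin

text \<open>The simple transposition s_i is identified with its index i in {1..n-1};
  a subset J of S is a set of such indices.\<close>

definition perms :: "nat \<Rightarrow> (nat \<Rightarrow> nat) set" where
  "perms n = {w. w permutes {1..n}}"

definition inversions :: "nat \<Rightarrow> (nat \<Rightarrow> nat) \<Rightarrow> (nat \<times> nat) set" where
  "inversions n w = {(i, j). 1 \<le> i \<and> i < j \<and> j \<le> n \<and> w i > w j}"

definition weak_le :: "nat \<Rightarrow> (nat \<Rightarrow> nat) \<Rightarrow> (nat \<Rightarrow> nat) \<Rightarrow> bool" where
  "weak_le n u v \<longleftrightarrow> inversions n u \<subseteq> inversions n v"

definition parabolic :: "nat \<Rightarrow> nat set \<Rightarrow> (nat \<Rightarrow> nat) set" where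
  "parabolic n J = {w \<in> perms n. \<forall>i\<in>J. w i < w (Suc i)}"

text \<open>Index (0-based) of the J-region containing position i: the number of
  descents-allowed positions j (s_j not in J) with j < i.\<close>
definition region :: "nat \<Rightarrow> nat set \<Rightarrow> nat \<Rightarrow> nat" where
  "region n J i = card {j \<in> {1..<n} - J. j < i}"

definition avoids231 :: "nat \<Rightarrow> nat set \<Rightarrow> (nat \<Rightarrow> nat) \<Rightarrow> bool" where
  "avoids231 n J w \<longleftrightarrow> \<not> (\<exists>i j k. 1 \<le> i \<and> i < j \<and> j < k \<and> k \<le> n \<and>
      region n J i \<noteq> region n J j \<and> region n J j \<noteq> region n J k \<and> region n J i \<noteq> region n J k \<and>
      w k < w i \<and> w i < w j \<and> w i = w k + 1)"

definition parabolic231 :: "nat \<Rightarrow> nat set \<Rightarrow> (nat \<Rightarrow> nat) set" where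
  "parabolic231 n J = {w \<in> parabolic n J. avoids231 n J w}"

definition pi_down :: "nat \<Rightarrow> nat set \<Rightarrow> (nat \<Rightarrow> nat) \<Rightarrow> (nat \<Rightarrow> nat)" where
  "pi_down n J w = (THE y. y \<in> parabolic231 n J \<and> weak_le n y w \<and>
      (\<forall>z \<in> parabolic231 n J. weak_le n z w \<longrightarrow> weak_le n z y))"

end

theory Submission
  imports Defs
begin

text \<open>If w has a 231-pattern i < j < k in three regions with w i = w k + 1, then swapping the
  values at i and k deletes exactly the inversion (i, k) and keeps w in the parabolic quotient,
  while no 231-avoiding element below w has the inversion (i, k): otherwise a second pattern,
  with an adjacent pair of values straddling the positions i..k, would appear in it.
  Induction on the number of inversions shows that Pi_down^J(w) is well defined.
  Convexity of the fibres is then a formal consequence: Pi_down^J(u) lies below u and hence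
  below x, and every 231-avoiding element below x lies below v, hence below Pi_down^J(v).\<close>

definition greatest_231_below :: "nat \<Rightarrow> nat set \<Rightarrow> (nat \<Rightarrow> nat) \<Rightarrow> (nat \<Rightarrow> nat) \<Rightarrow> bool" where
  "greatest_231_below n J w y \<longleftrightarrow> y \<in> parabolic231 n J \<and> weak_le n y w \<and>
      (\<forall>z \<in> parabolic231 n J. weak_le n z w \<longrightarrow> weak_le n z y)"

lemma parabolic_permutes: "w \<in> parabolic n J \<Longrightarrow> w permutes {1..n}"
  by (simp add: parabolic_def perms_def)

lemma parabolic231_permutes: "w \<in> parabolic231 n J \<Longrightarrow> w permutes {1..n}"
  by (simp add: parabolic231_def parabolic_def perms_def)

lemma finite_inversions: "finite (inversions n w)"
  by (rule finite_subset[of _ "{1..n} \<times> {1..n}"]) (auto simp: inversions_def)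

lemma permutes_eq_card_le:
  assumes y: "y permutes {1..n}" and i: "i \<in> {1..n}"
  shows "y i = card {j \<in> {1..n}. y j \<le> y i}"
proof -
  have "y ` {j \<in> {1..n}. y j \<le> y i} = {v \<in> y ` {1..n}. v \<le> y i}"
    by blast
  also have "\<dots> = {1..y i}"
    using permutes_image[OF y] permutes_in_image[OF y, of i] i by auto
  finally have "card {j \<in> {1..n}. y j \<le> y i} = card {1..y i}"
    using card_image[OF inj_on_subset[OF permutes_inj[OF y]]] by (metis subset_UNIV)
  then show ?thesis by simp
qed

lemma permutes_le_iff_inversions:
  assumes y: "y permutes {1..n}" and i: "i \<in> {1..n}" and j: "j \<in> {1..n}"
  shows "y j \<le> y i \<longleftrightarrow>
    j = i \<or> (j < i \<and> (j, i) \<notin> inversions n y) \<or> (i < j \<and> (i, j) \<in> inversions n y)"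
proof (cases "j = i")
  case False
  then have "y j \<noteq> y i" using permutes_inj[OF y] by (metis injD)
  then show ?thesis using False i j unfolding inversions_def by auto
qed simp

lemma permutes_eq_if_inversions_eq:
  assumes "y1 permutes {1..n}" "y2 permutes {1..n}" "inversions n y1 = inversions n y2"
  shows "y1 = y2"
proof
  fix i
  show "y1 i = y2 i"
  proof (cases "i \<in> {1..n}")
    case True
    have "{j \<in> {1..n}. y1 j \<le> y1 i} = {j \<in> {1..n}. y2 j \<le> y2 i}"
      using permutes_le_iff_inversions[OF assms(1) True] permutes_le_iff_inversions[OF assms(2) True]
        assms(3) by auto
    then show ?thesis
      using permutes_eq_card_le[OF assms(1) True] permutes_eq_card_le[OF assms(2) True] by simp
  next
    case False
    then show ?thesis using assms(1,2) by (simp add: permutes_not_in)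
  qed
qed

lemma weak_le_antisym:
  assumes "y1 permutes {1..n}" "y2 permutes {1..n}" "weak_le n y1 y2" "weak_le n y2 y1"
  shows "y1 = y2"
  using assms by (intro permutes_eq_if_inversions_eq) (auto simp: weak_le_def)

lemma inversions_swap_adjacent_values:
  assumes w: "w permutes {1..n}" and ik: "1 \<le> i" "i < k" "k \<le> n" and adj: "w i = w k + 1"
  shows "inversions n (w \<circ> transpose i k) = inversions n w - {(i, k)}"
proof -
  have other: "(w p < w k \<longleftrightarrow> w p < w i) \<and> (w k < w p \<longleftrightarrow> w i < w p)" if "p \<noteq> i" "p \<noteq> k" for p
  proof -
    have "w p \<noteq> w i" "w p \<noteq> w k" using that permutes_inj[OF w] by (auto dest: injD)
    then show ?thesis using adj by auto
  qed
  show ?thesis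
  proof (rule set_eqI)
    fix pq :: "nat \<times> nat"
    obtain p q where pq: "pq = (p, q)" by fastforce
    show "pq \<in> inversions n (w \<circ> transpose i k) \<longleftrightarrow> pq \<in> inversions n w - {(i, k)}"
      unfolding pq inversions_def using other[of p] other[of q] adj ik
      by (cases "p = i"; cases "p = k"; cases "q = i"; cases "q = k"; auto)
  qed
qed

lemma parabolic_weak_le_closed:
  assumes J: "J \<subseteq> {1..<n}" and v: "v \<in> parabolic n J"
    and u: "u permutes {1..n}" and uv: "weak_le n u v"
  shows "u \<in> parabolic n J"
proof -
  have "u l < u (Suc l)" if l: "l \<in> J" for l
  proof -
    have "v l < v (Suc l)" using v l by (simp add: parabolic_def)
    then have "(l, Suc l) \<notin> inversions n u" using uv by (auto simp: weak_le_def inversions_def)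
    moreover have "u l \<noteq> u (Suc l)" using permutes_inj[OF u] by (metis injD n_not_Suc_n)
    ultimately show ?thesis using J l by (auto simp: inversions_def)
  qed
  then show ?thesis using u by (simp add: parabolic_def perms_def)
qed

lemma region_mono: "p \<le> q \<Longrightarrow> region n J p \<le> region n J q"
  unfolding region_def by (rule card_mono) auto

lemma values_between_outside_interval:
  assumes w: "w permutes {1..n}" and zw: "weak_le n z w"
    and ikn: "1 \<le> i" "k \<le> n" and ik: "i < k" and adj: "w i = w k + 1"
    and p: "p \<in> {1..n}" "z k < z p" "z p < z i"
  shows "p < i \<or> k < p"
proof (rule ccontr)
  assume "\<not> (p < i \<or> k < p)"
  moreover have "p \<noteq> i" "p \<noteq> k" using p by auto
  ultimately have pik: "i < p" "p < k" by auto
  have "w p \<noteq> w i" "w p \<noteq> w k" using pik permutes_inj[OF w] by (auto dest: injD)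
  then consider "w p < w k" | "w i < w p" using adj by linarith
  then show False
  proof cases
    case 1
    then have "(p, k) \<notin> inversions n z" using zw by (auto simp: weak_le_def inversions_def)
    then show False using pik p ikn by (auto simp: inversions_def)
  next
    case 2
    then have "(i, p) \<notin> inversions n z" using zw by (auto simp: weak_le_def inversions_def)
    then show False using pik p ikn by (auto simp: inversions_def)
  qed
qed

lemma adjacent_values_straddling_interval:
  fixes z :: "nat \<Rightarrow> nat"
  assumes z: "z permutes {1..n}" and ik: "1 \<le> i" "i < k" "k \<le> n" and zki: "z k < z i"
    and outside: "\<And>p. p \<in> {1..n} \<Longrightarrow> z k < z p \<Longrightarrow> z p < z i \<Longrightarrow> p < i \<or> k < p"
  obtains a c where "1 \<le> a" "a \<le> i" "k \<le> c" "c \<le> n" "z a = z c + 1" "z a \<le> z i"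
proof -
  define S where "S = {p \<in> {1..n}. k \<le> p \<and> z k \<le> z p \<and> z p < z i}"
  have "k \<in> S" using ik zki by (auto simp: S_def)
  moreover have "finite S" by (simp add: S_def)
  ultimately obtain c where cS: "c \<in> S" and cmax: "\<And>p. p \<in> S \<Longrightarrow> z p \<le> z c"
    using Max_in[of "z ` S"] Max_ge[of "z ` S"] by (metis empty_iff finite_imageI imageE image_eqI)
  \<comment> \<open>the value just above z c sits at a position a; by maximality of z c it cannot lie right of k\<close>
  have "Suc (z c) \<in> {1..n}" using cS permutes_in_image[OF z, of i] ik by (auto simp: S_def)
  then obtain a where a: "a \<in> {1..n}" "z a = Suc (z c)"
    using permutes_image[OF z] by (metis imageE)
  have "a \<le> i"
  proof (cases "Suc (z c) = z i")
    case True
    then show ?thesis using a permutes_inj[OF z] by (auto dest: injD)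
  next
    case False
    then have between: "z k < z a" "z a < z i" using a cS by (auto simp: S_def)
    have "\<not> k < a"
    proof
      assume "k < a"
      then have "a \<in> S" using a between by (auto simp: S_def)
      then show False using cmax[of a] a(2) by simp
    qed
    then show ?thesis using outside[OF a(1) between] by simp
  qed
  then show ?thesis using that a cS by (auto simp: S_def)
qed

lemma avoids231_below_lacks_pattern_inversion:
  assumes w: "w permutes {1..n}" and z: "z permutes {1..n}" and za: "avoids231 n J z"
    and zw: "weak_le n z w"
    and ijk: "1 \<le> i" "i < j" "j < k" "k \<le> n"
    and R: "region n J i \<noteq> region n J j" "region n J j \<noteq> region n J k"
    and wv: "w k < w i" "w i < w j" "w i = w k + 1"
  shows "(i, k) \<notin> inversions n z"
proof
  assume "(i, k) \<in> inversions n z"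
  then have zki: "z k < z i" by (simp add: inversions_def)
  have "(i, j) \<notin> inversions n z" using zw wv ijk by (auto simp: weak_le_def inversions_def)
  moreover have "z i \<noteq> z j" using permutes_inj[OF z] ijk by (auto dest: injD)
  ultimately have zij: "z i < z j" using ijk by (auto simp: inversions_def)
  have ik: "i < k" using ijk by simp
  obtain a c where ac: "1 \<le> a" "a \<le> i" "k \<le> c" "c \<le> n" "z a = z c + 1" "z a \<le> z i"
    using adjacent_values_straddling_interval[OF z ijk(1) ik ijk(4) zki
        values_between_outside_interval[OF w zw ijk(1) ijk(4) ik wv(3)]] by blast
  have "region n J a \<le> region n J i" "region n J k \<le> region n J c"
    using region_mono ac by auto
  moreover have "region n J i < region n J j" "region n J j < region n J k"
    using R region_mono[of i j n J] region_mono[of j k n J] ijk by simp_all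
  ultimately have "1 \<le> a \<and> a < j \<and> j < c \<and> c \<le> n \<and>
      region n J a \<noteq> region n J j \<and> region n J j \<noteq> region n J c \<and> region n J a \<noteq> region n J c \<and>
      z c < z a \<and> z a < z j \<and> z a = z c + 1"
    using ac ijk zij by auto
  then show False using za unfolding avoids231_def by blast
qed

lemma greatest_231_below_unique:
  assumes "greatest_231_below n J w y1" "greatest_231_below n J w y2"
  shows "y1 = y2"
proof (rule weak_le_antisym)
  show "y1 permutes {1..n}" "y2 permutes {1..n}"
    using assms unfolding greatest_231_below_def by (blast intro: parabolic231_permutes)+
  show "weak_le n y1 y2" "weak_le n y2 y1"
    using assms unfolding greatest_231_below_def by simp_all
qed

lemma greatest_231_below_swap_adjacent_values:
  assumes w: "w permutes {1..n}"
    and ijk: "1 \<le> i" "i < j" "j < k" "k \<le> n"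
    and R: "region n J i \<noteq> region n J j" "region n J j \<noteq> region n J k"
    and wv: "w k < w i" "w i < w j" "w i = w k + 1"
    and y: "greatest_231_below n J (w \<circ> transpose i k) y"
  shows "greatest_231_below n J w y"
proof -
  have inv: "inversions n (w \<circ> transpose i k) = inversions n w - {(i, k)}"
    using inversions_swap_adjacent_values[OF w _ _ _ wv(3)] ijk by simp
  have "weak_le n z (w \<circ> transpose i k)"
    if z: "z \<in> parabolic231 n J" "weak_le n z w" for z
  proof -
    have "(i, k) \<notin> inversions n z"
      using avoids231_below_lacks_pattern_inversion[OF w parabolic231_permutes[OF z(1)] _ _ ijk R wv]
        z by (simp add: parabolic231_def)
    then show ?thesis using z(2) inv by (auto simp: weak_le_def)
  qed
  then show ?thesis using y inv by (auto simp: greatest_231_below_def weak_le_def)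
qed

lemma greatest_231_below_exists:
  assumes J: "J \<subseteq> {1..<n}"
  shows "w \<in> parabolic n J \<Longrightarrow> \<exists>y. greatest_231_below n J w y"
proof (induction "card (inversions n w)" arbitrary: w rule: less_induct)
  case less
  show ?case
  proof (cases "avoids231 n J w")
    case True
    then have "greatest_231_below n J w w"
      using less.prems by (auto simp: greatest_231_below_def parabolic231_def weak_le_def)
    then show ?thesis by blast
  next
    case False
    then obtain i j k where ijk: "1 \<le> i" "i < j" "j < k" "k \<le> n"
      and R: "region n J i \<noteq> region n J j" "region n J j \<noteq> region n J k"
      and wv: "w k < w i" "w i < w j" "w i = w k + 1"
      unfolding avoids231_def by blast
    have w: "w permutes {1..n}" using less.prems by (rule parabolic_permutes)
    have inv: "inversions n (w \<circ> transpose i k) = inversions n w - {(i, k)}"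
      using inversions_swap_adjacent_values[OF w _ _ _ wv(3)] ijk by simp
    have "(i, k) \<in> inversions n w" using ijk wv by (simp add: inversions_def)
    then have "card (inversions n (w \<circ> transpose i k)) < card (inversions n w)"
      unfolding inv by (rule card_Diff1_less[OF finite_inversions])
    moreover have "w \<circ> transpose i k \<in> parabolic n J"
    proof (rule parabolic_weak_le_closed[OF J less.prems])
      show "w \<circ> transpose i k permutes {1..n}"
        by (rule permutes_compose[OF permutes_swap_id w]) (use ijk in auto)
      show "weak_le n (w \<circ> transpose i k) w" using inv by (auto simp: weak_le_def)
    qed
    ultimately obtain y where "greatest_231_below n J (w \<circ> transpose i k) y"
      using less.hyps by blast
    then show ?thesis
      using greatest_231_below_swap_adjacent_values[OF w ijk R wv] by blast
  qed
qed

lemma pi_down_eqI: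
  assumes "greatest_231_below n J w y"
  shows "pi_down n J w = y"
  unfolding pi_down_def greatest_231_below_def[symmetric]
  by (rule the_equality[of "greatest_231_below n J w", OF assms])
    (rule greatest_231_below_unique[OF _ assms])

lemma pi_down_greatest:
  assumes "J \<subseteq> {1..<n}" "w \<in> parabolic n J"
  shows "greatest_231_below n J w (pi_down n J w)"
  using greatest_231_below_exists[OF assms] pi_down_eqI by metis

lemma greatest_231_below_convex:
  assumes "greatest_231_below n J u y" "greatest_231_below n J v y"
    and "weak_le n u x" "weak_le n x v"
  shows "greatest_231_below n J x y"
  using assms unfolding greatest_231_below_def weak_le_def by (meson subset_trans)

theorem lemma3p13:
  fixes n :: nat and J :: "nat set" and u x v :: "nat \<Rightarrow> nat"
  assumes "J \<subseteq> {1..<n}"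
    and "u \<in> parabolic n J" and "x \<in> parabolic n J" and "v \<in> parabolic n J"
    and "weak_le n u x" and "weak_le n x v"
    and "pi_down n J u = pi_down n J v"
  shows "pi_down n J u = pi_down n J x"
proof -
  have "greatest_231_below n J u (pi_down n J u)"
    using pi_down_greatest[OF assms(1,2)] .
  moreover have "greatest_231_below n J v (pi_down n J u)"
    using pi_down_greatest[OF assms(1,4)] assms(7) by simp
  ultimately have "greatest_231_below n J x (pi_down n J u)"
    using greatest_231_below_convex assms(5,6) by blast
  then show ?thesis by (rule pi_down_eqI[symmetric])
qed

end
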